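(* There exists a family of bijections $\sigma_{\ell_1,\ell_2}:D_{\ell_1,\ell_2}\to\{1,\dots,\ell_1+\ell_2\}$, indexed by all pairs of non-negative integers $(\ell_1,\ell_2)$, where $D_{\ell_1,\ell_2}=\{(i,j): i\in\{1,2\},\ 1\le j\le \ell_i\}$, and an absolute constant $C$, such that for all $\ell_1,\ell_2\ge 0$ with $L=\ell_1+\ell_2$: the number of elements of $D_{\ell_1,\ell_2}$ whose image under $\sigma_{\ell_1+1,\ell_2}$ differs from their image under $\sigma_{\ell_1,\ell_2}$ is at most $C\log(L+2)$, and likewise with $\sigma_{\ell_1,\ell_2+1}$ in place of $\sigma_{\ell_1+1,\ell_2}$.
   Context: Interpretation: $(i,j)$ denotes the $j$-th word of the $i$-th of two variable-length memories, and $\sigma_{\ell_1,\ell_2}(i,j)$ its position in a combined memory of $\ell_1+\ell_2$ words; the bijection depends only on the two sizes, and incrementing one size (an allocation) or decrementing it (a release, which is the reverse transition) should relocate few words. *)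

theory Defs
  imports Complex_Main
begin

definition D :: "nat \<Rightarrow> nat \<Rightarrow> (nat \<times> nat) set" where
  "D l1 l2 = {(i, j). (i = 1 \<and> 1 \<le> j \<and> j \<le> l1) \<or> (i = 2 \<and> 1 \<le> j \<and> j \<le> l2)}"

end

theory Submission
  imports Defs "HOL-Library.Log_Nat"
begin

text \<open>Words at odd positions of either memory are merged recursively into the odd slots
  \<open>2k - 1\<close> of the combined memory, words at even positions into the even slots \<open>2k\<close>.
  When both sizes are odd this would put one word too many into the odd slots, so the last
  word of memory 1 is sent to the even half instead. A unit change of the sizes induces, in each
  half, either no change or again a unit change, and moves at most one word between the halves;
  hence the number of relocated words grows by at most one per halving level, which gives
  the logarithmic bound.\<close>

lemma bij_betw_double_minus_one:
  "n \<le> m \<Longrightarrow> m \<le> Suc n \<Longrightarrow> bij_betw (\<lambda>k::nat. 2 * k - 1) {1..m} {k \<in> {1..m + n}. odd k}"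
  by (rule bij_betw_byWitness[where f' = "\<lambda>k. (k + 1) div 2"]) (auto elim!: oddE)

lemma bij_betw_double:
  "n \<le> m \<Longrightarrow> m \<le> Suc n \<Longrightarrow> bij_betw (\<lambda>k::nat. 2 * k) {1..n} {k \<in> {1..m + n}. even k}"
  by (rule bij_betw_byWitness[where f' = "\<lambda>k. k div 2"]) (auto elim!: evenE)

lemma bij_betw_odd_even_merge:
  assumes f: "bij_betw f A {1..m}" and g: "bij_betw g B {1..n}"
    and disj: "A \<inter> B = {}" and bounds: "n \<le> m" "m \<le> Suc n"
  shows "bij_betw (\<lambda>x. if x \<in> B then 2 * g x else 2 * f x - 1) (A \<union> B) {1..m + n}"
proof -
  have "bij_betw (\<lambda>x. if x \<in> B then 2 * g x else 2 * f x - 1) A {k \<in> {1..m + n}. odd k}"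
    using bij_betw_trans[OF f bij_betw_double_minus_one[OF bounds]]
  proof (rule bij_betw_cong[THEN iffD1, rotated])
    show "((\<lambda>k. 2 * k - 1) \<circ> f) x = (if x \<in> B then 2 * g x else 2 * f x - 1)" if "x \<in> A" for x
      using that disj by auto
  qed
  moreover have "bij_betw (\<lambda>x. if x \<in> B then 2 * g x else 2 * f x - 1) B {k \<in> {1..m + n}. even k}"
    using bij_betw_trans[OF g bij_betw_double[OF bounds]]
    by (rule bij_betw_cong[THEN iffD1, rotated]) auto
  ultimately have "bij_betw (\<lambda>x. if x \<in> B then 2 * g x else 2 * f x - 1) (A \<union> B)
      ({k \<in> {1..m + n}. odd k} \<union> {k \<in> {1..m + n}. even k})"
    by (rule bij_betw_combine) auto
  also have "{k \<in> {1..m + n}. odd k} \<union> {k \<in> {1..m + n}. even k} = {1..m + n}"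
    by auto
  finally show ?thesis .
qed

abbreviation words :: "nat \<times> nat \<Rightarrow> (nat \<times> nat) set" where
  "words s \<equiv> case_prod D s"

lemma card_words: "card (words s) = fst s + snd s"
proof -
  obtain l1 l2 where s: "s = (l1, l2)" by (cases s)
  have "D l1 l2 = Pair 1 ` {1..l1} \<union> Pair 2 ` {1..l2}"
    by (auto simp: D_def)
  moreover have "card (Pair (1::nat) ` {1..l1} \<union> Pair 2 ` {1..l2}) = l1 + l2"
    by (subst card_Un_disjoint) (auto simp: card_image inj_on_def)
  ultimately show ?thesis by (simp add: s)
qed

lemma finite_words [simp]: "finite (words s)"
  by (rule finite_subset[of _ "{1, 2} \<times> {1..fst s + snd s}"]) (auto simp: D_def split: prod.splits)

lemma words_Int: "words p \<inter> words q = words (min (fst p) (fst q), min (snd p) (snd q))"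
  by (auto simp: D_def split: prod.splits)

fun even_part :: "nat \<times> nat \<Rightarrow> nat \<times> nat" where
  "even_part (l1, l2) = (l1 div 2 + of_bool (odd l1 \<and> odd l2), l2 div 2)"

fun odd_part :: "nat \<times> nat \<Rightarrow> nat \<times> nat" where
  "odd_part (l1, l2) = ((l1 + 1) div 2 - of_bool (odd l1 \<and> odd l2), (l2 + 1) div 2)"

fun goes_even :: "nat \<times> nat \<Rightarrow> nat \<times> nat \<Rightarrow> bool" where
  "goes_even (l1, l2) (i, j) \<longleftrightarrow> even j \<or> (odd l1 \<and> odd l2 \<and> i = 1 \<and> j = l1)"

fun half_word :: "nat \<times> nat \<Rightarrow> nat \<times> nat" where
  "half_word (i, j) = (i, (j + 1) div 2)"

lemma total_even_part: "fst (even_part s) + snd (even_part s) = (fst s + snd s) div 2"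
  by (cases s) (auto elim!: oddE)

lemma total_odd_part: "fst (odd_part s) + snd (odd_part s) = (fst s + snd s + 1) div 2"
  by (cases s) (auto elim!: oddE)

lemma bij_betw_half_word_even:
  "bij_betw half_word {x \<in> words s. goes_even s x} (words (even_part s))"
proof -
  obtain l1 l2 where s: "s = (l1, l2)" by fastforce
  have "(i, k) \<in> half_word ` {x \<in> D l1 l2. goes_even (l1, l2) x}"
    if k: "(i, k) \<in> words (even_part (l1, l2))" for i k
  proof (cases "odd l1 \<and> odd l2 \<and> i = 1 \<and> k = (l1 + 1) div 2")
    case True
    then show ?thesis by (intro image_eqI[of _ _ "(1, l1)"]) (auto simp: D_def elim: oddE)
  next
    case False
    then show ?thesis using k
      by (intro image_eqI[of _ _ "(i, 2 * k)"]) (auto simp: D_def of_bool_def split: if_splits)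
  qed
  then show ?thesis
    unfolding bij_betw_def inj_on_def s by (auto simp: D_def elim!: oddE evenE)
qed

lemma bij_betw_half_word_odd:
  "bij_betw half_word {x \<in> words s. \<not> goes_even s x} (words (odd_part s))"
proof -
  obtain l1 l2 where s: "s = (l1, l2)" by fastforce
  have "(i, k) \<in> half_word ` {x \<in> D l1 l2. \<not> goes_even (l1, l2) x}"
    if "(i, k) \<in> words (odd_part (l1, l2))" for i k
    using that by (intro image_eqI[of _ _ "(i, 2 * k - 1)"]) (auto simp: D_def elim!: oddE)
  then show ?thesis
    unfolding bij_betw_def inj_on_def s by (auto simp: D_def elim!: oddE evenE)
qed

function interleave :: "nat \<times> nat \<Rightarrow> nat \<times> nat \<Rightarrow> nat" where
  "interleave s x =
    (if fst s + snd s \<le> 1 then 1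
     else if goes_even s x then 2 * interleave (even_part s) (half_word x)
     else 2 * interleave (odd_part s) (half_word x) - 1)"
  by auto
termination
  by (relation "measure (\<lambda>(s, x). fst s + snd s)") (auto simp: total_even_part total_odd_part)

declare interleave.simps [simp del]

lemma bij_betw_interleave: "bij_betw (interleave s) (words s) {1..fst s + snd s}"
proof (induction "fst s + snd s" arbitrary: s rule: less_induct)
  case less
  show ?case
  proof (cases "fst s + snd s \<le> 1")
    case True
    then consider "s = (0, 0)" | "s = (1, 0)" | "s = (0, 1)"
      by (cases s) (auto simp: le_Suc_eq add_is_1)
    then show ?thesis
      by cases (auto simp: bij_betw_def inj_on_def D_def interleave.simps)
  next
    case False
    let ?E = "{x \<in> words s. goes_even s x}" and ?O = "{x \<in> words s. \<not> goes_even s x}"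
    have "bij_betw (interleave (odd_part s)) (words (odd_part s)) {1..(fst s + snd s + 1) div 2}"
      using less[of "odd_part s"] False by (simp add: total_odd_part)
    with bij_betw_half_word_odd
    have "bij_betw (interleave (odd_part s) \<circ> half_word) ?O {1..(fst s + snd s + 1) div 2}"
      by (rule bij_betw_trans)
    moreover have "bij_betw (interleave (even_part s)) (words (even_part s)) {1..(fst s + snd s) div 2}"
      using less[of "even_part s"] False by (simp add: total_even_part)
    with bij_betw_half_word_even
    have "bij_betw (interleave (even_part s) \<circ> half_word) ?E {1..(fst s + snd s) div 2}"
      by (rule bij_betw_trans)
    ultimately have "bij_betw (\<lambda>x. if x \<in> ?E then 2 * (interleave (even_part s) \<circ> half_word) x
        else 2 * (interleave (odd_part s) \<circ> half_word) x - 1) (?O \<union> ?E)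
        {1..(fst s + snd s + 1) div 2 + (fst s + snd s) div 2}"
      by (rule bij_betw_odd_even_merge) auto
    also have "?O \<union> ?E = words s" by auto
    also have "(fst s + snd s + 1) div 2 + (fst s + snd s) div 2 = fst s + snd s" by presburger
    finally show ?thesis
      by (rule bij_betw_cong[THEN iffD1, rotated]) (use False in \<open>auto simp: interleave.simps[of s]\<close>)
  qed
qed

lemma interleave_even:
  "2 \<le> fst s + snd s \<Longrightarrow> goes_even s x \<Longrightarrow> interleave s x = 2 * interleave (even_part s) (half_word x)"
  by (simp add: interleave.simps[of s])

lemma interleave_odd:
  "2 \<le> fst s + snd s \<Longrightarrow> \<not> goes_even s x \<Longrightarrow> interleave s x = 2 * interleave (odd_part s) (half_word x) - 1"
  by (simp add: interleave.simps[of s])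

definition displaced :: "nat \<times> nat \<Rightarrow> nat \<times> nat \<Rightarrow> (nat \<times> nat) set" where
  "displaced p q = {x \<in> words p \<inter> words q. interleave p x \<noteq> interleave q x}"

lemma displaced_commute: "displaced p q = displaced q p"
  by (auto simp: displaced_def)

lemma displaced_self [simp]: "displaced s s = {}"
  by (simp add: displaced_def)

lemma card_displaced_le_min: "card (displaced p q) \<le> min (fst p) (fst q) + min (snd p) (snd q)"
proof -
  have "card (displaced p q) \<le> card (words p \<inter> words q)"
    by (rule card_mono) (auto simp: displaced_def)
  then show ?thesis
    using card_words[of "(min (fst p) (fst q), min (snd p) (snd q))"] by (simp add: words_Int)
qed

lemma goes_even_disagree:
  "x \<in> words p \<inter> words q \<Longrightarrow> goes_even p x \<noteq> goes_even q x \<Longrightarrow> x = (1, min (fst p) (fst q))"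
  by (cases p; cases q; cases x) (auto simp: D_def)

lemma half_word_displaced_even:
  assumes "2 \<le> fst p + snd p" "2 \<le> fst q + snd q"
    and x: "x \<in> displaced p q" "goes_even p x" "goes_even q x"
  shows "half_word x \<in> displaced (even_part p) (even_part q)"
proof -
  have "half_word x \<in> words (even_part p)" "half_word x \<in> words (even_part q)"
    using x bij_betw_apply[OF bij_betw_half_word_even] by (auto simp: displaced_def)
  moreover have "interleave (even_part p) (half_word x) \<noteq> interleave (even_part q) (half_word x)"
    using x by (auto simp: displaced_def interleave_even assms)
  ultimately show ?thesis by (simp add: displaced_def)
qed

lemma half_word_displaced_odd:
  assumes "2 \<le> fst p + snd p" "2 \<le> fst q + snd q"
    and x: "x \<in> displaced p q" "\<not> goes_even p x" "\<not> goes_even q x"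
  shows "half_word x \<in> displaced (odd_part p) (odd_part q)"
proof -
  have "half_word x \<in> words (odd_part p)" "half_word x \<in> words (odd_part q)"
    using x bij_betw_apply[OF bij_betw_half_word_odd] by (auto simp: displaced_def)
  moreover have "interleave (odd_part p) (half_word x) \<noteq> interleave (odd_part q) (half_word x)"
    using x by (auto simp: displaced_def interleave_odd assms)
  ultimately show ?thesis by (simp add: displaced_def)
qed

lemma card_displaced_le:
  assumes p: "2 \<le> fst p + snd p" and q: "2 \<le> fst q + snd q"
  shows "card (displaced p q)
    \<le> card (displaced (even_part p) (even_part q)) + card (displaced (odd_part p) (odd_part q)) + 1"
proof -
  let ?Ev = "{x \<in> displaced p q. goes_even p x \<and> goes_even q x}"
  let ?Od = "{x \<in> displaced p q. \<not> goes_even p x \<and> \<not> goes_even q x}"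
  have "displaced p q \<subseteq> ?Ev \<union> ?Od \<union> {(1, min (fst p) (fst q))}"
    using goes_even_disagree unfolding displaced_def by blast
  then have "card (displaced p q) \<le> card (?Ev \<union> ?Od \<union> {(1, min (fst p) (fst q))})"
    by (rule card_mono[rotated]) (simp add: displaced_def)
  also have "\<dots> \<le> card ?Ev + card ?Od + 1"
    using card_Un_le[of "?Ev \<union> ?Od" "{(1, min (fst p) (fst q))}"] card_Un_le[of ?Ev ?Od] by simp
  also have "card ?Ev \<le> card (displaced (even_part p) (even_part q))"
  proof (rule card_inj_on_le)
    show "inj_on half_word ?Ev"
      using bij_betw_half_word_even[of p] by (auto simp: bij_betw_def displaced_def intro: inj_on_subset)
    show "half_word ` ?Ev \<subseteq> displaced (even_part p) (even_part q)"
      using half_word_displaced_even[OF p q] by blast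
  qed (simp add: displaced_def)
  also have "card ?Od \<le> card (displaced (odd_part p) (odd_part q))"
  proof (rule card_inj_on_le)
    show "inj_on half_word ?Od"
      using bij_betw_half_word_odd[of p] by (auto simp: bij_betw_def displaced_def intro: inj_on_subset)
    show "half_word ` ?Od \<subseteq> displaced (odd_part p) (odd_part q)"
      using half_word_displaced_odd[OF p q] by blast
  qed (simp add: displaced_def)
  finally show ?thesis by simp
qed

text \<open>The middle bound, comparing \<open>(a + 1, b)\<close> with \<open>(a, b + 1)\<close>, must be carried along:
  halving an increment of \<open>l2\<close> with \<open>l1\<close> odd produces exactly this comparison in one half.\<close>

lemma card_displaced_pow2:
  assumes "a + b \<le> 2 ^ n"
  shows "card (displaced (a + 1, b) (a, b)) \<le> n + 1
    \<and> card (displaced (a + 1, b) (a, b + 1)) \<le> n + 1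
    \<and> card (displaced (a, b + 1) (a, b)) \<le> 2 * n + 2"
  using assms
proof (induction n arbitrary: a b)
  case 0
  then show ?case
    using card_displaced_le_min[of "(a + 1, b)" "(a, b)"] card_displaced_le_min[of "(a + 1, b)" "(a, b + 1)"]
      card_displaced_le_min[of "(a, b + 1)" "(a, b)"]
    by simp
next
  case (Suc n)
  show ?case
  proof (cases "a + b \<le> 1")
    case True
    then have "a + b \<le> 2 ^ n" by (simp add: order_trans[OF _ one_le_power])
    then show ?thesis using Suc.IH by fastforce
  next
    case False
    consider (ee) c d where "a = 2 * c" "b = 2 * d" | (oe) c d where "a = 2 * c + 1" "b = 2 * d"
      | (eo) c d where "a = 2 * c" "b = 2 * d + 1" | (oo) c d where "a = 2 * c + 1" "b = 2 * d + 1"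
      by (metis evenE oddE)
    then show ?thesis
    proof cases
      case ee
      then have "c + d \<le> 2 ^ n" using Suc.prems by simp
      then show ?thesis
        using card_displaced_le[of "(a + 1, b)" "(a, b)"] card_displaced_le[of "(a + 1, b)" "(a, b + 1)"]
          card_displaced_le[of "(a, b + 1)" "(a, b)"] Suc.IH[of c d] False ee
        by simp
    next
      case oe
      then have "c + d \<le> 2 ^ n" using Suc.prems by simp
      then show ?thesis
        using card_displaced_le[of "(a + 1, b)" "(a, b)"] card_displaced_le[of "(a + 1, b)" "(a, b + 1)"]
          card_displaced_le[of "(a, b + 1)" "(a, b)"] Suc.IH[of c d] False oe
        by (simp add: displaced_commute[of "(c, Suc d)"])
    next
      case eo
      then have "c + d \<le> 2 ^ n" using Suc.prems by simp
      then show ?thesis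
        using card_displaced_le[of "(a + 1, b)" "(a, b)"] card_displaced_le[of "(a + 1, b)" "(a, b + 1)"]
          card_displaced_le[of "(a, b + 1)" "(a, b)"] Suc.IH[of c d] False eo
        by simp
    next
      case oo
      then have "c + (d + 1) \<le> 2 ^ n" "c + d \<le> 2 ^ n" using Suc.prems by simp_all
      then show ?thesis
        using card_displaced_le[of "(a + 1, b)" "(a, b)"] card_displaced_le[of "(a + 1, b)" "(a, b + 1)"]
          card_displaced_le[of "(a, b + 1)" "(a, b)"] Suc.IH[of c "d + 1"] Suc.IH[of c d] oo
        by (simp add: displaced_commute[of "(c, Suc d)"])
    qed
  qed
qed

lemma two_power_log_bound: "\<exists>n. L \<le> 2 ^ n \<and> real (2 * n + 2) \<le> 6 / ln 2 * ln (real L + 2)"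
proof (intro exI conjI)
  show "L \<le> 2 ^ ceillog2 L" by (rule le_two_power_ceillog2)
  have one_le_log: "1 \<le> log 2 (real L + 2)" by simp
  have "real (ceillog2 L) \<le> log 2 (real L + 2) + 1"
  proof (cases "L = 0")
    case False
    then have "real (ceillog2 L) < log 2 (real L) + 1" by (simp add: ceillog2_less_log)
    also have "log 2 (real L) \<le> log 2 (real L + 2)" using False by simp
    finally show ?thesis by simp
  qed simp
  then have "real (2 * ceillog2 L + 2) \<le> 6 * log 2 (real L + 2)" using one_le_log by linarith
  also have "\<dots> = 6 / ln 2 * ln (real L + 2)" by (simp add: log_def)
  finally show "real (2 * ceillog2 L + 2) \<le> 6 / ln 2 * ln (real L + 2)" .
qed

theorem lemma2p1:
  shows "\<exists>(\<sigma> :: nat \<Rightarrow> nat \<Rightarrow> nat \<times> nat \<Rightarrow> nat) (C :: real).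
     (\<forall>l1 l2. bij_betw (\<sigma> l1 l2) (D l1 l2) {1..l1 + l2}) \<and>
     (\<forall>l1 l2.
        real (card {x \<in> D l1 l2. \<sigma> (l1 + 1) l2 x \<noteq> \<sigma> l1 l2 x})
          \<le> C * ln (real (l1 + l2) + 2) \<and>
        real (card {x \<in> D l1 l2. \<sigma> l1 (l2 + 1) x \<noteq> \<sigma> l1 l2 x})
          \<le> C * ln (real (l1 + l2) + 2))"
proof (intro exI[of _ "\<lambda>l1 l2. interleave (l1, l2)"] exI[of _ "6 / ln 2"] conjI allI)
  fix l1 l2 :: nat
  show "bij_betw (interleave (l1, l2)) (D l1 l2) {1..l1 + l2}"
    using bij_betw_interleave[of "(l1, l2)"] by simp
  obtain n where n: "l1 + l2 \<le> 2 ^ n" and log: "real (2 * n + 2) \<le> 6 / ln 2 * ln (real (l1 + l2) + 2)"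
    using two_power_log_bound by blast
  have "{x \<in> D l1 l2. interleave (l1 + 1, l2) x \<noteq> interleave (l1, l2) x} = displaced (l1 + 1, l2) (l1, l2)"
    "{x \<in> D l1 l2. interleave (l1, l2 + 1) x \<noteq> interleave (l1, l2) x} = displaced (l1, l2 + 1) (l1, l2)"
    by (auto simp: displaced_def D_def)
  with card_displaced_pow2[OF n] log
  show "real (card {x \<in> D l1 l2. interleave (l1 + 1, l2) x \<noteq> interleave (l1, l2) x})
      \<le> 6 / ln 2 * ln (real (l1 + l2) + 2)"
    and "real (card {x \<in> D l1 l2. interleave (l1, l2 + 1) x \<noteq> interleave (l1, l2) x})
      \<le> 6 / ln 2 * ln (real (l1 + l2) + 2)"
    by simp_all
qed

end
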